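(* For every $s\ge1$, the power series $E_s(\mathbf{x})=\Psi_s(\mathbf{x};0)=\sum_{\mathbf{k}\in\mathbb{Z}_{\ge0}^s}V_{\mathbf{k}}\frac{\mathbf{x}^{\mathbf{k}}}{\mathbf{k}!}$, where $V_{\mathbf{k}}$ is the number of $0$-dimensional faces of $\Gamma_{\mathbf{k}}$, satisfies $$\Big(\frac{\partial^s}{\partial x_1\cdots\partial x_s}-\prod_{i=1}^{s-1}\Big(\frac{\partial}{\partial x_i}+\frac{\partial}{\partial x_{i+1}}\Big)\Big)E_s(\mathbf{x})=0.$$
   Context: Ladder diagrams: $Q^+$ is the directed graph on $\mathbb{Z}_{\ge0}^2$ with edges $((i,j),(i,j+1))$ and $((i,j),(i+1,j))$. For a sequence $\mathbf{k}=(k_1,\dots,k_s)$ of positive integers with sum $n$, let $n_0=0$, $n_i=\sum_{j\le i}k_j$, $T_{\mathbf{k}}=\{(n_\ell,n-n_\ell):0\le\ell\le s\}$, and $\Gamma_{\mathbf{k}}$ the induced subgraph of $Q^+$ on $\{(a,b):a\le c,b\le d\text{ for some }(c,d)\in T_{\mathbf{k}}\}$. For nonnegative sequences, $\Gamma_{\mathbf{k}}$ is $\Gamma$ of the subsequence of positive entries (single vertex $(0,0)$ if all entries are zero). A positive path is a shortest directed path from $(0,0)$ to a vertex of $T_{\mathbf{k}}$; a face of $\Gamma_{\mathbf{k}}$ is a subgraph containing all of $T_{\mathbf{k}}$ that is a union of positive paths; its dimension is $\operatorname{rank}H_1$ of it as a 1-dimensional CW complex. $F_{\mathbf{k}}(t)=\sum_\gamma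 t^{\dim\gamma}$ over faces, and $\Psi_s(\mathbf{x};t)=\sum_{\mathbf{k}\in\mathbb{Z}_{\ge0}^s}F_{\mathbf{k}}(t)\frac{\mathbf{x}^{\mathbf{k}}}{\mathbf{k}!}$ with $\mathbf{x}^{\mathbf{k}}=x_1^{k_1}\cdots x_s^{k_s}$, $\mathbf{k}!=k_1!\cdots k_s!$. Thus $V_{\mathbf{k}}=F_{\mathbf{k}}(0)$, which by Theorem 1.1 equals the number of vertices of the corresponding Gelfand–Cetlin polytope. *)

theory Defs
  imports Complex_Main
begin

type_synonym vert = "nat \<times> nat"

definition pos_part :: "nat list \<Rightarrow> nat list" where
  "pos_part k = filter (\<lambda>x. x > 0) k"

definition T_set :: "nat list \<Rightarrow> vert set" where
  "T_set k = {(sum_list (take l k), sum_list k - sum_list (take l k)) | l. l \<le> length k}"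

definition Qplus_edge :: "vert \<Rightarrow> vert \<Rightarrow> bool" where
  "Qplus_edge u v \<longleftrightarrow> (fst v = fst u \<and> snd v = Suc (snd u)) \<or> (fst v = Suc (fst u) \<and> snd v = snd u)"

definition T_of :: "nat list \<Rightarrow> vert set" where
  "T_of k = T_set (pos_part k)"

definition Gamma_V :: "nat list \<Rightarrow> vert set" where
  "Gamma_V k = {(a, b). \<exists>(c, d) \<in> T_of k. a \<le> c \<and> b \<le> d}"

definition Gamma_E :: "nat list \<Rightarrow> (vert \<times> vert) set" where
  "Gamma_E k = {(u, v). u \<in> Gamma_V k \<and> v \<in> Gamma_V k \<and> Qplus_edge u v}"

definition is_walk :: "vert set \<Rightarrow> (vert \<times> vert) set \<Rightarrow> vert \<Rightarrow> vert \<Rightarrow> vert list \<Rightarrow> bool" where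
  "is_walk V E u v p \<longleftrightarrow> p \<noteq> [] \<and> hd p = u \<and> last p = v \<and> set p \<subseteq> V \<and>
     (\<forall>i. Suc i < length p \<longrightarrow> (p ! i, p ! Suc i) \<in> E)"

definition path_edges :: "vert list \<Rightarrow> (vert \<times> vert) set" where
  "path_edges p = {(p ! i, p ! Suc i) | i. Suc i < length p}"

definition positive_path :: "nat list \<Rightarrow> vert list \<Rightarrow> bool" where
  "positive_path k p \<longleftrightarrow> (\<exists>v \<in> T_of k. is_walk (Gamma_V k) (Gamma_E k) (0, 0) v p \<and>
     (\<forall>q. is_walk (Gamma_V k) (Gamma_E k) (0, 0) v q \<longrightarrow> length p \<le> length q))"

definition faces :: "nat list \<Rightarrow> (vert set \<times> (vert \<times> vert) set) set" where
  "faces k = {(W, F). \<exists>P. P \<subseteq> {p. positive_path k p} \<and>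
      W = (\<Union>p\<in>P. set p) \<and> F = (\<Union>p\<in>P. path_edges p) \<and> T_of k \<subseteq> W}"

definition n_components :: "vert set \<Rightarrow> (vert \<times> vert) set \<Rightarrow> nat" where
  "n_components W F = card (W // Restr ((F \<union> F\<inverse>)\<^sup>*) W)"

text \<open>rank H_1 of a finite graph = |E| - |V| + #components.\<close>
definition face_dim :: "vert set \<times> (vert \<times> vert) set \<Rightarrow> nat" where
  "face_dim g = (card (snd g) + n_components (fst g) (snd g)) - card (fst g)"

definition V_count :: "nat list \<Rightarrow> nat" where
  "V_count k = card {g \<in> faces k. face_dim g = 0}"

text \<open>Formal power series in s variables x_1..x_s, represented by their coefficient
  functions on exponent vectors (lists of length s; coefficient 0 elsewhere).
  Variable x_{i+1} corresponds to list index i.\<close>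
type_synonym mps = "nat list \<Rightarrow> real"

definition pd :: "nat \<Rightarrow> mps \<Rightarrow> mps" where
  "pd i f = (\<lambda>k. real (Suc (k ! i)) * f (k[i := Suc (k ! i)]))"

definition mixed_op :: "nat \<Rightarrow> mps \<Rightarrow> mps" where
  "mixed_op s f = foldr pd [0..<s] f"

definition prod_op :: "nat \<Rightarrow> mps \<Rightarrow> mps" where
  "prod_op s f = foldr (\<lambda>i g. (\<lambda>k. pd i g k + pd (Suc i) g k)) [0..<s - 1] f"

definition E_series :: "nat \<Rightarrow> mps" where
  "E_series s = (\<lambda>k. if length k = s
       then real (V_count k) / real (prod_list (map fact k)) else 0)"

end

(*
  A face of Gamma_k depends on k only through T_k and is a union of monotone lattice paths from
  the origin, hence connected; so rank H_1 = |F| - |W| + 1 vanishes exactly when no vertex has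
  two incoming edges. Applying d^s/(dx_1 ... dx_s) to E_s shifts the exponent k to
  k + (1, ..., 1), whose target points all lie on one antidiagonal. Removing them with their
  incoming edges from a zero-dimensional face leaves a zero-dimensional face of
  Gamma_(k + e_j1 + ... + e_j(s-1)), where j_i is i or i + 1 according as the i-th interior target
  point is entered from below or from the left; the two extreme target points have only one
  possible predecessor. Summing over these choices is exactly the expansion of
  prod_i (d/dx_i + d/dx_(i+1)), and the factors k_j + 1 produced by differentiation cancel
  against the factorials in the denominators.
*)

theory Submission
  imports Defs
begin

type_synonym face = "vert set \<times> (vert \<times> vert) set"

section \<open>Faces as unions of monotone lattice paths\<close>

definition level :: "vert \<Rightarrow> nat" where
  "level v = fst v + snd v"

definition lower_set :: "vert set \<Rightarrow> vert set" where
  "lower_set T = {(a, b). \<exists>(c, d) \<in> T. a \<le> c \<and> b \<le> d}"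

definition lower_edges :: "vert set \<Rightarrow> (vert \<times> vert) set" where
  "lower_edges T = {(u, v). u \<in> lower_set T \<and> v \<in> lower_set T \<and> Qplus_edge u v}"

definition pos_path :: "vert set \<Rightarrow> vert list \<Rightarrow> bool" where
  "pos_path T p \<longleftrightarrow> (\<exists>v \<in> T. is_walk (lower_set T) (lower_edges T) (0, 0) v p \<and>
     (\<forall>q. is_walk (lower_set T) (lower_edges T) (0, 0) v q \<longrightarrow> length p \<le> length q))"

definition faces_of :: "vert set \<Rightarrow> face set" where
  "faces_of T = {(W, F). \<exists>P. P \<subseteq> {p. pos_path T p} \<and>
      W = (\<Union>p\<in>P. set p) \<and> F = (\<Union>p\<in>P. path_edges p) \<and> T \<subseteq> W}"

lemma faces_eq_faces_of: "faces k = faces_of (T_of k)"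
proof -
  have "Gamma_V k = lower_set (T_of k)" "Gamma_E k = lower_edges (T_of k)"
    unfolding Gamma_V_def lower_set_def Gamma_E_def lower_edges_def by simp_all
  then have "positive_path k = pos_path (T_of k)"
    unfolding positive_path_def pos_path_def by simp
  then show ?thesis unfolding faces_def faces_of_def by simp
qed

definition lattice_path :: "vert list \<Rightarrow> bool" where
  "lattice_path p \<longleftrightarrow> p \<noteq> [] \<and> hd p = (0, 0) \<and>
     (\<forall>i. Suc i < length p \<longrightarrow> Qplus_edge (p ! i) (p ! Suc i))"

lemma Qplus_edge_level: "Qplus_edge u v \<Longrightarrow> level v = Suc (level u)"
  by (auto simp: Qplus_edge_def level_def)

lemma Qplus_edge_mono: "Qplus_edge u v \<Longrightarrow> fst u \<le> fst v \<and> snd u \<le> snd v"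
  by (auto simp: Qplus_edge_def)

lemma Qplus_edge_into:
  "Qplus_edge u (a, b) \<Longrightarrow> (a \<ge> 1 \<and> u = (a - 1, b)) \<or> (b \<ge> 1 \<and> u = (a, b - 1))"
  by (cases u) (auto simp: Qplus_edge_def)

lemma lattice_path_level_nth: "lattice_path p \<Longrightarrow> i < length p \<Longrightarrow> level (p ! i) = i"
proof (induction i)
  case 0
  then show ?case by (cases p) (auto simp: lattice_path_def level_def)
next
  case (Suc i)
  then have "level (p ! i) = i" "Qplus_edge (p ! i) (p ! Suc i)"
    by (auto simp: lattice_path_def)
  then show ?case by (simp add: Qplus_edge_level)
qed

lemma lattice_path_mono:
  assumes "lattice_path p" "i \<le> j" "j < length p"
  shows "fst (p ! i) \<le> fst (p ! j) \<and> snd (p ! i) \<le> snd (p ! j)"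
  using assms(2,3)
proof (induction j)
  case (Suc j)
  show ?case
  proof (cases "i = Suc j")
    case False
    then have "fst (p ! i) \<le> fst (p ! j) \<and> snd (p ! i) \<le> snd (p ! j)"
      using Suc by simp
    moreover have "Qplus_edge (p ! j) (p ! Suc j)"
      using Suc.prems assms(1) by (simp add: lattice_path_def)
    ultimately show ?thesis using Qplus_edge_mono by fastforce
  qed simp
qed simp

lemma length_lattice_path: "lattice_path p \<Longrightarrow> length p = Suc (level (last p))"
  using lattice_path_level_nth[of p "length p - 1"]
  by (auto simp: lattice_path_def last_conv_nth)

lemma lattice_path_level_le:
  "lattice_path p \<Longrightarrow> v \<in> set p \<Longrightarrow> level v \<le> level (last p)"
  using length_lattice_path by (fastforce simp: in_set_conv_nth lattice_path_level_nth)

lemma lattice_path_last_unique: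
  assumes "lattice_path p" "v \<in> set p" "level v = level (last p)"
  shows "v = last p"
proof -
  obtain i where "i < length p" "v = p ! i"
    using assms(2) by (auto simp: in_set_conv_nth)
  moreover from this have "i = length p - 1"
    using assms lattice_path_level_nth length_lattice_path by simp
  ultimately show ?thesis
    using assms(1) by (simp add: lattice_path_def last_conv_nth)
qed

lemma lattice_path_snoc:
  assumes "lattice_path p" "Qplus_edge (last p) t"
  shows "lattice_path (p @ [t])"
  unfolding lattice_path_def
proof (intro conjI allI impI)
  show "hd (p @ [t]) = (0, 0)" using assms(1) by (simp add: lattice_path_def)
next
  fix i assume i: "Suc i < length (p @ [t])"
  show "Qplus_edge ((p @ [t]) ! i) ((p @ [t]) ! Suc i)"
  proof (cases "Suc i < length p")
    case True
    then show ?thesis using assms(1) by (simp add: nth_append lattice_path_def)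
  next
    case False
    then have "i = length p - 1" "p \<noteq> []"
      using i assms(1) by (auto simp: lattice_path_def)
    then show ?thesis using assms(2) by (simp add: nth_append last_conv_nth)
  qed
qed simp

lemma lattice_path_butlast:
  assumes "lattice_path p" "level (last p) \<ge> 1"
  shows "lattice_path (butlast p) \<and> p = butlast p @ [last p] \<and>
    (\<forall>v \<in> set (butlast p). level v < level (last p))"
proof (intro conjI ballI)
  have len: "length p = Suc (level (last p))"
    using assms(1) by (rule length_lattice_path)
  then have ne: "butlast p \<noteq> []"
    using assms(2) by (cases p rule: rev_cases) auto
  show p: "p = butlast p @ [last p]"
    using assms(1) by (simp add: lattice_path_def)
  show "lattice_path (butlast p)"
    unfolding lattice_path_def
  proof (intro conjI allI impI)
    show "hd (butlast p) = (0, 0)"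
      using assms(1) ne p by (metis hd_append2 lattice_path_def)
  next
    fix i assume "Suc i < length (butlast p)"
    then show "Qplus_edge (butlast p ! i) (butlast p ! Suc i)"
      using assms(1) by (simp add: nth_butlast lattice_path_def)
  qed (rule ne)
  fix v assume "v \<in> set (butlast p)"
  then obtain i where "i < length p - 1" "v = p ! i"
    by (auto simp: in_set_conv_nth nth_butlast)
  then show "level v < level (last p)"
    using assms(1) len lattice_path_level_nth by simp
qed

lemma path_edges_snoc:
  assumes "p \<noteq> []"
  shows "path_edges (p @ [t]) = insert (last p, t) (path_edges p)"
proof (intro equalityI subsetI)
  fix e assume "e \<in> path_edges (p @ [t])"
  then obtain i where i: "Suc i < Suc (length p)" "e = ((p @ [t]) ! i, (p @ [t]) ! Suc i)"
    by (auto simp: path_edges_def)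
  show "e \<in> insert (last p, t) (path_edges p)"
  proof (cases "Suc i < length p")
    case True
    then show ?thesis using i by (auto simp: nth_append path_edges_def)
  next
    case False
    then have "i = length p - 1" using i by simp
    then show ?thesis using i assms by (simp add: nth_append last_conv_nth)
  qed
next
  fix e assume "e \<in> insert (last p, t) (path_edges p)"
  then consider "e = ((p @ [t]) ! (length p - 1), (p @ [t]) ! Suc (length p - 1))"
    | i where "Suc i < length p" "e = ((p @ [t]) ! i, (p @ [t]) ! Suc i)"
    using assms by (auto simp: path_edges_def nth_append last_conv_nth)
  then show "e \<in> path_edges (p @ [t])"
    using assms unfolding path_edges_def by cases fastforce+
qed

lemma UN_snoc:
  assumes ext: "\<forall>p\<in>P. \<exists>t. (last p, t) \<in> E" and ends: "\<forall>u\<in>Domain E. \<exists>p\<in>P. last p = u"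
    and f: "\<And>p t. p \<in> P \<Longrightarrow> f (p @ [t]) = f p \<union> h (last p, t)"
  shows "(\<Union>q\<in>{p @ [t] |p t. p \<in> P \<and> (last p, t) \<in> E}. f q) =
    (\<Union>p\<in>P. f p) \<union> (\<Union>e\<in>E. h e)"
proof (intro equalityI subsetI)
  fix x assume "x \<in> (\<Union>q\<in>{p @ [t] |p t. p \<in> P \<and> (last p, t) \<in> E}. f q)"
  then obtain p t where "p \<in> P" "(last p, t) \<in> E" "x \<in> f (p @ [t])" by blast
  then show "x \<in> (\<Union>p\<in>P. f p) \<union> (\<Union>e\<in>E. h e)" using f by blast
next
  fix x assume "x \<in> (\<Union>p\<in>P. f p) \<union> (\<Union>e\<in>E. h e)"
  then consider p where "p \<in> P" "x \<in> f p" | u t where "(u, t) \<in> E" "x \<in> h (u, t)"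
    by (metis UN_E UnE surj_pair)
  then show "x \<in> (\<Union>q\<in>{p @ [t] |p t. p \<in> P \<and> (last p, t) \<in> E}. f q)"
  proof cases
    case (1 p)
    then obtain t where "(last p, t) \<in> E" using ext by blast
    with 1 f show ?thesis by blast
  next
    case (2 u t)
    then obtain p where "p \<in> P" "last p = u" using ends by blast
    with 2 f show ?thesis by blast
  qed
qed

lemma lower_set_iff: "v \<in> lower_set T \<longleftrightarrow> (\<exists>t\<in>T. fst v \<le> fst t \<and> snd v \<le> snd t)"
  by (cases v) (force simp: lower_set_def)

lemma finite_lower_set: "finite T \<Longrightarrow> finite (lower_set T)"
  by (rule finite_subset[of _ "\<Union>t\<in>T. {..fst t} \<times> {..snd t}"])
    (auto simp: lower_set_iff)

lemma lattice_path_subset_lower_set: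
  assumes "lattice_path p" "last p \<in> T"
  shows "set p \<subseteq> lower_set T"
proof
  fix v assume "v \<in> set p"
  then obtain i where "i < length p" "v = p ! i" by (auto simp: in_set_conv_nth)
  then have "fst v \<le> fst (last p) \<and> snd v \<le> snd (last p)"
    using assms(1) lattice_path_mono[OF assms(1), of i "length p - 1"]
    by (simp add: lattice_path_def last_conv_nth)
  then show "v \<in> lower_set T" using assms(2) lower_set_iff by blast
qed

text \<open>Every walk in Q+ from the origin to a vertex of level n has exactly n edges, and a
  monotone lattice path ending in T never leaves the lower set of T.\<close>

lemma pos_path_iff: "pos_path T p \<longleftrightarrow> lattice_path p \<and> last p \<in> T"
proof -
  have walk: "lattice_path q" if "is_walk (lower_set T) (lower_edges T) (0, 0) v q" for v q
    using that by (auto simp: is_walk_def lattice_path_def lower_edges_def)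
  show ?thesis
  proof
    assume "pos_path T p"
    then show "lattice_path p \<and> last p \<in> T"
      using walk by (auto simp: pos_path_def is_walk_def)
  next
    assume p: "lattice_path p \<and> last p \<in> T"
    then have "set p \<subseteq> lower_set T" using lattice_path_subset_lower_set by blast
    then have "is_walk (lower_set T) (lower_edges T) (0, 0) (last p) p"
      using p by (auto simp: is_walk_def lattice_path_def lower_edges_def)
    moreover have "length p \<le> length q"
      if "is_walk (lower_set T) (lower_edges T) (0, 0) (last p) q" for q
      using that walk[OF that] p length_lattice_path by (simp add: is_walk_def)
    ultimately show "pos_path T p" using p unfolding pos_path_def by blast
  qed
qed

lemma faces_ofE:
  assumes "(W, F) \<in> faces_of T"
  obtains P where "\<And>p. p \<in> P \<Longrightarrow> lattice_path p \<and> last p \<in> T"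
    "W = (\<Union>p\<in>P. set p)" "F = (\<Union>p\<in>P. path_edges p)" "T \<subseteq> W"
  using assms unfolding faces_of_def pos_path_iff by blast

lemma faces_ofI:
  assumes "\<And>p. p \<in> P \<Longrightarrow> lattice_path p \<and> last p \<in> T"
    "W = (\<Union>p\<in>P. set p)" "F = (\<Union>p\<in>P. path_edges p)" "T \<subseteq> W"
  shows "(W, F) \<in> faces_of T"
  using assms unfolding faces_of_def pos_path_iff by blast

lemma face_edge:
  assumes "(W, F) \<in> faces_of T" "(u, v) \<in> F"
  shows "Qplus_edge u v \<and> u \<in> W \<and> v \<in> W"
proof -
  obtain P where P: "\<And>p. p \<in> P \<Longrightarrow> lattice_path p \<and> last p \<in> T"
    "W = (\<Union>p\<in>P. set p)" "F = (\<Union>p\<in>P. path_edges p)"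
    using faces_ofE[OF assms(1)] by metis
  then obtain p i where p: "p \<in> P" "Suc i < length p" "u = p ! i" "v = p ! Suc i"
    using assms(2) by (auto simp: path_edges_def)
  then have "u \<in> set p" "v \<in> set p" by simp_all
  then have "u \<in> W" "v \<in> W" using P(2) p(1) by blast+
  moreover have "Qplus_edge u v" using P(1)[OF p(1)] p by (simp add: lattice_path_def)
  ultimately show ?thesis by blast
qed

lemma face_subset_lower_set: "(W, F) \<in> faces_of T \<Longrightarrow> W \<subseteq> lower_set T"
  by (metis faces_ofE lattice_path_subset_lower_set UN_least)

lemma face_level_le:
  assumes "(W, F) \<in> faces_of T" "T \<subseteq> {v. level v = n}" "w \<in> W"
  shows "level w \<le> n"
proof -
  obtain P where P: "\<And>p. p \<in> P \<Longrightarrow> lattice_path p \<and> last p \<in> T"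
    "W = (\<Union>p\<in>P. set p)"
    using faces_ofE[OF assms(1)] by metis
  then obtain p where "p \<in> P" "w \<in> set p" using assms(3) by blast
  then show ?thesis using P(1) assms(2) lattice_path_level_le by fastforce
qed

lemma origin_in_face:
  assumes "(W, F) \<in> faces_of T" "T \<noteq> {}"
  shows "(0, 0) \<in> W"
proof -
  obtain P where P: "\<And>p. p \<in> P \<Longrightarrow> lattice_path p \<and> last p \<in> T"
    "W = (\<Union>p\<in>P. set p)" "T \<subseteq> W"
    using faces_ofE[OF assms(1)] by metis
  then obtain p where "p \<in> P" using assms(2) by blast
  then show ?thesis using P(1,2) hd_in_set by (fastforce simp: lattice_path_def)
qed

lemma face_reachable_from_origin:
  assumes "(W, F) \<in> faces_of T" "w \<in> W"
  shows "((0, 0), w) \<in> F\<^sup>*"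
proof -
  obtain P where P: "\<And>p. p \<in> P \<Longrightarrow> lattice_path p \<and> last p \<in> T"
    "W = (\<Union>p\<in>P. set p)" "F = (\<Union>p\<in>P. path_edges p)"
    using faces_ofE[OF assms(1)] by metis
  then obtain p i where p: "p \<in> P" "i < length p" "w = p ! i"
    using assms(2) by (auto simp: in_set_conv_nth)
  have "((0, 0), p ! j) \<in> (path_edges p)\<^sup>*" if "j < length p" for j
    using that
  proof (induction j)
    case 0
    then show ?case using P(1)[OF p(1)] by (cases p) (auto simp: lattice_path_def)
  next
    case (Suc j)
    then have "(p ! j, p ! Suc j) \<in> path_edges p" by (auto simp: path_edges_def)
    with Suc show ?case by (meson Suc_lessD rtrancl.rtrancl_into_rtrancl)
  qed
  moreover have "path_edges p \<subseteq> F" using P(3) p(1) by auto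
  ultimately show ?thesis using p rtrancl_mono by blast
qed

lemma face_in_edge:
  assumes "(W, F) \<in> faces_of T" "v \<in> W" "v \<noteq> (0, 0)"
  shows "\<exists>u. (u, v) \<in> F"
proof -
  obtain P where P: "\<And>p. p \<in> P \<Longrightarrow> lattice_path p \<and> last p \<in> T"
    "W = (\<Union>p\<in>P. set p)" "F = (\<Union>p\<in>P. path_edges p)"
    using faces_ofE[OF assms(1)] by metis
  then obtain p i where p: "p \<in> P" "i < length p" "v = p ! i"
    using assms(2) by (auto simp: in_set_conv_nth)
  moreover have "i \<noteq> 0"
    using P(1)[OF p(1)] p assms(3) by (metis hd_conv_nth lattice_path_def)
  ultimately have "(p ! (i - 1), v) \<in> path_edges p"
    unfolding path_edges_def by (intro CollectI exI[of _ "i - 1"]) simp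
  then show ?thesis using P(3) p(1) by blast
qed

section \<open>Zero-dimensional faces\<close>

lemma n_components_face:
  assumes "(W, F) \<in> faces_of T" "T \<noteq> {}"
  shows "n_components W F = 1"
proof -
  let ?R = "Restr ((F \<union> F\<inverse>)\<^sup>*) W"
  have connected: "(x, y) \<in> (F \<union> F\<inverse>)\<^sup>*" if "x \<in> W" "y \<in> W" for x y
  proof -
    have "((0, 0), y) \<in> (F \<union> F\<inverse>)\<^sup>*" "((0, 0), x) \<in> (F \<union> F\<inverse>)\<^sup>*"
      using face_reachable_from_origin[OF assms(1)] that rtrancl_mono[of F "F \<union> F\<inverse>"] by blast+
    then show ?thesis
      by (metis converse_Un converse_converse rtrancl_converseI rtrancl_trans sup_commute)
  qed
  have "?R `` {x} = W" if "x \<in> W" for x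
    using connected that by blast
  then have "W // ?R = {W}"
    unfolding quotient_def using origin_in_face[OF assms] by blast
  then show ?thesis unfolding n_components_def by simp
qed

definition in_degree_le1 :: "(vert \<times> vert) set \<Rightarrow> bool" where
  "in_degree_le1 F \<longleftrightarrow> (\<forall>u u' v. (u, v) \<in> F \<longrightarrow> (u', v) \<in> F \<longrightarrow> u = u')"

lemma card_face_edges:
  assumes "(W, F) \<in> faces_of T" "finite W"
  shows "card F = (\<Sum>v\<in>W - {(0, 0)}. card {u. (u, v) \<in> F})"
proof -
  have "F = (\<lambda>(v, u). (u, v)) ` (SIGMA v:W - {(0, 0)}. {u. (u, v) \<in> F})"
    using face_edge[OF assms(1)] by (force simp: Qplus_edge_def)
  moreover have "inj_on (\<lambda>(v, u). (u, v)) (SIGMA v:W - {(0, 0)}. {u. (u, v) \<in> F})"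
    by (auto simp: inj_on_def)
  ultimately have "card F = card (SIGMA v:W - {(0, 0)}. {u. (u, v) \<in> F})"
    by (metis card_image)
  also have "\<dots> = (\<Sum>v\<in>W - {(0, 0)}. card {u. (u, v) \<in> F})"
    using assms face_edge[OF assms(1)]
    by (intro card_SigmaI) (auto intro: finite_subset[of _ W])
  finally show ?thesis .
qed

text \<open>A face is connected, so its first Betti number is |F| - |W| + 1; as every vertex
  but the origin has an incoming edge, this vanishes iff no vertex has two.\<close>

lemma face_dim_eq_0_iff:
  assumes face: "(W, F) \<in> faces_of T" and "T \<noteq> {}" "finite T"
  shows "face_dim (W, F) = 0 \<longleftrightarrow> in_degree_le1 F"
proof -
  define indeg where "indeg v = card {u. (u, v) \<in> F}" for v
  have fin: "finite W"
    using face_subset_lower_set[OF face] finite_lower_set[OF assms(3)] finite_subset by blast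
  have W: "card W = Suc (card (W - {(0, 0)}))"
    using card.remove[OF fin origin_in_face[OF face assms(2)]] .
  have fin_in: "finite {u. (u, v) \<in> F}" for v
    using face_edge[OF face] by (blast intro: finite_subset[OF _ fin])
  have pos: "indeg v \<ge> 1" if "v \<in> W - {(0, 0)}" for v
    using face_in_edge[OF face] that fin_in[of v] unfolding indeg_def
    by (simp add: Suc_le_eq card_gt_0_iff)
  have "card F = (\<Sum>v\<in>W - {(0, 0)}. indeg v)"
    using card_face_edges[OF face fin] unfolding indeg_def .
  also have "\<dots> = (\<Sum>v\<in>W - {(0, 0)}. 1 + (indeg v - 1))"
    using pos by (intro sum.cong) (simp_all only: le_add_diff_inverse)
  also have "\<dots> = card (W - {(0, 0)}) + (\<Sum>v\<in>W - {(0, 0)}. indeg v - 1)"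
    by (subst sum.distrib) simp
  finally have "face_dim (W, F) = (\<Sum>v\<in>W - {(0, 0)}. indeg v - 1)"
    using n_components_face[OF face assms(2)] W by (simp add: face_dim_def)
  also have "\<dots> = 0 \<longleftrightarrow> (\<forall>v\<in>W - {(0, 0)}. indeg v \<le> 1)"
    using fin by simp
  also have "\<dots> \<longleftrightarrow> in_degree_le1 F"
  proof -
    have "(u, v) \<in> F \<Longrightarrow> v \<in> W - {(0, 0)}" for u v
      using face_edge[OF face, of u v] by (auto simp: Qplus_edge_def)
    then show ?thesis
      unfolding in_degree_le1_def indeg_def One_nat_def card_le_Suc0_iff_eq[OF fin_in] by blast
  qed
  finally show ?thesis .
qed

definition tree_faces :: "vert set \<Rightarrow> face set" where
  "tree_faces T = {g \<in> faces_of T. in_degree_le1 (snd g)}"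

lemma finite_tree_faces:
  assumes "finite T"
  shows "finite (tree_faces T)"
proof (rule finite_subset)
  show "tree_faces T \<subseteq> Pow (lower_set T) \<times> Pow (lower_set T \<times> lower_set T)"
    using face_subset_lower_set face_edge unfolding tree_faces_def by fastforce
  show "finite (Pow (lower_set T) \<times> Pow (lower_set T \<times> lower_set T))"
    using finite_lower_set[OF assms] by simp
qed

lemma T_set_eq_image:
  "T_set L = (\<lambda>l. (sum_list (take l L), sum_list L - sum_list (take l L))) ` {..length L}"
  by (auto simp: T_set_def)

lemma V_count_eq_card_tree_faces: "V_count L = card (tree_faces (T_of L))"
proof -
  have "finite (T_of L)" "T_of L \<noteq> {}"
    unfolding T_of_def T_set_eq_image by auto
  then have "{g \<in> faces L. face_dim g = 0} = tree_faces (T_of L)"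
    using face_dim_eq_0_iff unfolding faces_eq_faces_of tree_faces_def by fastforce
  then show ?thesis unfolding V_count_def by simp
qed

section \<open>Peeling off the top layer\<close>

definition edges_into :: "vert set \<Rightarrow> (vert \<times> vert) set \<Rightarrow> (vert \<times> vert) set" where
  "edges_into T F = {e \<in> F. snd e \<in> T}"

definition attach :: "(vert \<times> vert) set \<Rightarrow> face \<Rightarrow> face" where
  "attach E g = (fst g \<union> Range E, snd g \<union> E)"

definition detach :: "vert set \<Rightarrow> face \<Rightarrow> face" where
  "detach T g = (fst g - T, snd g - edges_into T (snd g))"

definition in_edge_choices :: "vert set \<Rightarrow> (vert \<times> vert) set set" where
  "in_edge_choices T =
    {E. E \<subseteq> {(u, t). t \<in> T \<and> Qplus_edge u t} \<and> (\<forall>t\<in>T. \<exists>!u. (u, t) \<in> E)}"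

lemma attach_face:
  assumes face: "(W, F) \<in> faces_of (Domain E)"
    and level: "Domain E \<subseteq> {v. level v = n}" and edges: "\<forall>(u, t)\<in>E. Qplus_edge u t"
  shows "(W \<union> Range E, F \<union> E) \<in> faces_of (Range E)"
proof -
  obtain P where P: "\<And>p. p \<in> P \<Longrightarrow> lattice_path p \<and> last p \<in> Domain E"
    "W = (\<Union>p\<in>P. set p)" "F = (\<Union>p\<in>P. path_edges p)" "Domain E \<subseteq> W"
    using faces_ofE[OF face] by metis
  have ends: "\<forall>u\<in>Domain E. \<exists>p\<in>P. last p = u"
  proof
    fix u assume u: "u \<in> Domain E"
    then obtain p where p: "p \<in> P" "u \<in> set p" using P(2,4) by blast
    then have "u = last p"
      using lattice_path_last_unique P(1) level u by (metis (mono_tags) mem_Collect_eq subsetD)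
    with p show "\<exists>p\<in>P. last p = u" by blast
  qed
  have ext: "\<forall>p\<in>P. \<exists>t. (last p, t) \<in> E"
    using P(1) by (simp add: Domain_iff)
  have "(\<Union>q\<in>{p @ [t] |p t. p \<in> P \<and> (last p, t) \<in> E}. set q) = W \<union> (\<Union>e\<in>E. {snd e})"
    unfolding P(2) by (rule UN_snoc[OF ext ends]) simp
  moreover have "(\<Union>q\<in>{p @ [t] |p t. p \<in> P \<and> (last p, t) \<in> E}. path_edges q) =
      F \<union> (\<Union>e\<in>E. {e})"
    unfolding P(3) using P(1) path_edges_snoc
    by (intro UN_snoc[OF ext ends]) (simp add: lattice_path_def)
  moreover have "lattice_path (p @ [t]) \<and> last (p @ [t]) \<in> Range E"
    if "p \<in> P" "(last p, t) \<in> E" for p t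
    using that P(1) lattice_path_snoc edges by fastforce
  ultimately show ?thesis
    by (intro faces_ofI[where P = "{p @ [t] |p t. p \<in> P \<and> (last p, t) \<in> E}"])
      (auto simp: Range_snd)
qed

lemma lattice_path_peel:
  assumes p: "lattice_path p" "last p \<in> T" and level: "T \<subseteq> {v. level v = Suc n}"
  shows "lattice_path (butlast p) \<and> set (butlast p) = set p - T \<and>
    path_edges (butlast p) = path_edges p - edges_into T (path_edges p) \<and>
    (last (butlast p), last p) \<in> path_edges p"
proof -
  have "level (last p) = Suc n" using p(2) level by blast
  then have bl: "lattice_path (butlast p)" "p = butlast p @ [last p]"
    "\<forall>v \<in> set (butlast p). v \<notin> T"
    using lattice_path_butlast[of p] p level by fastforce+
  then have ne: "butlast p \<noteq> []" by (simp add: lattice_path_def)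
  have pe: "path_edges p = insert (last (butlast p), last p) (path_edges (butlast p))"
    using path_edges_snoc[OF ne] bl(2) by metis
  have tgt: "\<forall>e \<in> path_edges (butlast p). snd e \<notin> T"
    using bl(3) by (auto simp: path_edges_def)
  have "set (butlast p @ [last p]) = insert (last p) (set (butlast p))" by simp
  then have sp: "set p = insert (last p) (set (butlast p))" by (simp only: bl(2)[symmetric])
  show ?thesis
    unfolding edges_into_def
  proof (intro conjI)
    show "set (butlast p) = set p - T" using sp bl(3) p(2) by auto
    show "path_edges (butlast p) = path_edges p - {e \<in> path_edges p. snd e \<in> T}"
      using pe tgt p(2) by fastforce
  qed (use bl(1) pe in auto)
qed

lemma detach_face:
  assumes face: "(W, F) \<in> faces_of T" and level: "T \<subseteq> {v. level v = Suc n}"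
  shows "(W - T, F - edges_into T F) \<in> faces_of (Domain (edges_into T F))"
proof -
  obtain P where P: "\<And>p. p \<in> P \<Longrightarrow> lattice_path p \<and> last p \<in> T"
    "W = (\<Union>p\<in>P. set p)" "F = (\<Union>p\<in>P. path_edges p)" "T \<subseteq> W"
    using faces_ofE[OF face] by metis
  have peel: "lattice_path (butlast p) \<and> set (butlast p) = set p - T \<and>
      path_edges (butlast p) = path_edges p - edges_into T (path_edges p) \<and>
      (last (butlast p), last p) \<in> path_edges p" if "p \<in> P" for p
    using lattice_path_peel P(1)[OF that] level by blast
  have "W - T = (\<Union>p\<in>P. set (butlast p))" using peel P(2) by auto
  moreover have "F - edges_into T F = (\<Union>p\<in>P. path_edges (butlast p))"
  proof -
    have "F - edges_into T F = (\<Union>p\<in>P. path_edges p - edges_into T (path_edges p))"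
      unfolding P(3) edges_into_def by blast
    also have "\<dots> = (\<Union>p\<in>P. path_edges (butlast p))"
      using peel by (intro SUP_cong) simp_all
    finally show ?thesis .
  qed
  moreover have "lattice_path (butlast p) \<and> last (butlast p) \<in> Domain (edges_into T F)"
    if p: "p \<in> P" for p
  proof -
    have "path_edges p \<subseteq> F" using P(3) p by blast
    then have "(last (butlast p), last p) \<in> edges_into T F"
      using peel[OF p] P(1)[OF p] unfolding edges_into_def by auto
    then show ?thesis using peel[OF p] by (simp add: Domain.DomainI)
  qed
  moreover have "Domain (edges_into T F) \<subseteq> W - T"
  proof
    fix u assume "u \<in> Domain (edges_into T F)"
    then obtain t where t: "(u, t) \<in> F" "t \<in> T" unfolding edges_into_def by auto
    then have "u \<in> W" "level t = Suc (level u)"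
      using face_edge[OF face t(1)] Qplus_edge_level by auto
    moreover have "level t = Suc n" using t(2) level by blast
    ultimately show "u \<in> W - T" using level by force
  qed
  ultimately show ?thesis by (intro faces_ofI[where P = "butlast ` P"]) auto
qed

lemma Range_in_edge_choice: "E \<in> in_edge_choices T \<Longrightarrow> Range E = T"
  unfolding in_edge_choices_def by blast

lemma attach_tree_face:
  assumes E: "E \<in> in_edge_choices T" and level: "T \<subseteq> {v. level v = Suc n}"
    and g: "g \<in> tree_faces (Domain E)"
  shows "attach E g \<in> tree_faces T \<and> edges_into T (snd (attach E g)) = E \<and>
    detach T (attach E g) = g"
proof -
  obtain W F where g_eq: "g = (W, F)" by fastforce
  have face: "(W, F) \<in> faces_of (Domain E)" and tree: "in_degree_le1 F"
    using g unfolding g_eq tree_faces_def by auto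
  have E_edges: "\<forall>(u, t)\<in>E. Qplus_edge u t \<and> t \<in> T"
    using E unfolding in_edge_choices_def by blast
  have Dom: "Domain E \<subseteq> {v. level v = n}"
    using E_edges level Qplus_edge_level by fastforce
  have W_T: "W \<inter> T = {}"
    using face_level_le[OF face Dom] level by fastforce
  have F_W: "v \<in> W" if "(u, v) \<in> F" for u v
    using face_edge[OF face that] by blast
  have "(W \<union> T, F \<union> E) \<in> faces_of T"
    using attach_face[OF face Dom] E_edges Range_in_edge_choice[OF E] by fastforce
  moreover have "in_degree_le1 (F \<union> E)"
    unfolding in_degree_le1_def
  proof (intro allI impI)
    fix u u' v assume "(u, v) \<in> F \<union> E" "(u', v) \<in> F \<union> E"
    moreover have "(x, v) \<in> F \<Longrightarrow> (y, v) \<notin> E" for x y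
      using F_W E_edges W_T by blast
    moreover have "(x, v) \<in> E \<Longrightarrow> (y, v) \<in> E \<Longrightarrow> x = y" for x y
      using E unfolding in_edge_choices_def by blast
    ultimately show "u = u'"
      using tree unfolding in_degree_le1_def by blast
  qed
  moreover have "edges_into T (F \<union> E) = E"
    using F_W E_edges W_T unfolding edges_into_def by fastforce
  moreover have "W \<union> T - T = W" "F \<union> E - E = F"
    using F_W E_edges W_T by fastforce+
  ultimately show ?thesis
    using Range_in_edge_choice[OF E]
    unfolding g_eq attach_def detach_def tree_faces_def by simp
qed

lemma detach_tree_face:
  assumes level: "T \<subseteq> {v. level v = Suc n}" and g: "g \<in> tree_faces T"
  shows "edges_into T (snd g) \<in> in_edge_choices T \<and>
    detach T g \<in> tree_faces (Domain (edges_into T (snd g))) \<and>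
    attach (edges_into T (snd g)) (detach T g) = g"
proof -
  obtain W F where g_eq: "g = (W, F)" by fastforce
  have face: "(W, F) \<in> faces_of T" and tree: "in_degree_le1 F"
    using g unfolding g_eq tree_faces_def by auto
  have T_W: "T \<subseteq> W" using faces_ofE[OF face] by metis
  have in_edge: "\<exists>u. (u, t) \<in> F" if "t \<in> T" for t
    using face_in_edge[OF face] that T_W level by (fastforce simp: level_def)
  have "edges_into T F \<subseteq> {(u, t). t \<in> T \<and> Qplus_edge u t}"
    using face_edge[OF face] unfolding edges_into_def by auto
  moreover have "\<forall>t\<in>T. \<exists>!u. (u, t) \<in> edges_into T F"
    using in_edge tree unfolding in_degree_le1_def edges_into_def by auto
  ultimately have E: "edges_into T F \<in> in_edge_choices T"
    unfolding in_edge_choices_def by blast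
  have "(W - T, F - edges_into T F) \<in> faces_of (Domain (edges_into T F))"
    by (rule detach_face[OF face level])
  moreover have "in_degree_le1 (F - edges_into T F)"
    using tree unfolding in_degree_le1_def by blast
  moreover have "W - T \<union> T = W" "F - edges_into T F \<union> edges_into T F = F"
    using T_W unfolding edges_into_def by blast+
  ultimately show ?thesis
    using E Range_in_edge_choice[OF E]
    unfolding g_eq attach_def detach_def tree_faces_def by simp
qed

lemma in_edge_choices_subset:
  assumes "E \<in> in_edge_choices T"
  shows "E \<subseteq> lower_set T \<times> T"
proof safe
  fix u t assume "(u, t) \<in> E"
  then have "t \<in> T" "Qplus_edge u t" using assms unfolding in_edge_choices_def by auto
  then show "u \<in> lower_set T" "t \<in> T" using Qplus_edge_mono lower_set_iff by blast+
qed

lemma finite_in_edge_choices: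
  assumes "finite T"
  shows "finite (in_edge_choices T)"
proof (rule finite_subset)
  show "in_edge_choices T \<subseteq> Pow (lower_set T \<times> T)"
    using in_edge_choices_subset by blast
  show "finite (Pow (lower_set T \<times> T))"
    using finite_lower_set[OF assms] assms by simp
qed

text \<open>The bijection strips the top layer T and its incoming edges off a zero-dimensional face;
  what remains is a zero-dimensional face whose top layer is the set of chosen predecessors.\<close>

lemma card_tree_faces_eq_sum:
  assumes "finite T" "T \<subseteq> {v. level v = Suc n}"
  shows "card (tree_faces T) = (\<Sum>E\<in>in_edge_choices T. card (tree_faces (Domain E)))"
proof -
  have "bij_betw (\<lambda>g. (edges_into T (snd g), detach T g)) (tree_faces T)
      (SIGMA E:in_edge_choices T. tree_faces (Domain E))"
    by (rule bij_betw_byWitness[where f' = "\<lambda>(E, g). attach E g"])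
      (use attach_tree_face[OF _ assms(2)] detach_tree_face[OF assms(2)] in auto)
  then have "card (tree_faces T) = card (SIGMA E:in_edge_choices T. tree_faces (Domain E))"
    by (rule bij_betw_same_card)
  also have "\<dots> = (\<Sum>E\<in>in_edge_choices T. card (tree_faces (Domain E)))"
  proof (rule card_SigmaI)
    show "finite (in_edge_choices T)" using finite_in_edge_choices[OF assms(1)] .
    show "\<forall>E\<in>in_edge_choices T. finite (tree_faces (Domain E))"
    proof
      fix E assume "E \<in> in_edge_choices T"
      then have "Domain E \<subseteq> lower_set T" using in_edge_choices_subset by blast
      then show "finite (tree_faces (Domain E))"
        using finite_lower_set[OF assms(1)] by (intro finite_tree_faces) (rule finite_subset)
    qed
  qed
  finally show ?thesis .
qed

section \<open>Target sets of shifted exponent vectors\<close>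

lemma T_set_Cons:
  "T_set (x # L) = insert (0, x + sum_list L) ((\<lambda>(a, b). (a + x, b)) ` T_set L)"
proof -
  have "T_set (x # L) = insert (0, x + sum_list L)
      ((\<lambda>l. (sum_list (take (Suc l) (x # L)), sum_list (x # L) - sum_list (take (Suc l) (x # L))))
        ` {..length L})"
    unfolding T_set_eq_image by (simp add: atMost_Suc_eq_insert_0 image_image)
  then show ?thesis unfolding T_set_eq_image by (simp add: image_image add.commute)
qed

lemma T_of_eq_T_set: "T_of L = T_set L"
  unfolding T_of_def pos_part_def
proof (induction L)
  case (Cons x L)
  show ?case
  proof (cases "x > 0")
    case True
    moreover have "sum_list (filter (\<lambda>x. x > 0) L) = sum_list L"
      by (induction L) auto
    ultimately show ?thesis using Cons by (simp add: T_set_Cons)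
  next
    case False
    moreover have "(0, sum_list L) \<in> T_set L" unfolding T_set_def by force
    ultimately show ?thesis using Cons by (simp add: T_set_Cons insert_absorb)
  qed
qed simp

definition incr_at :: "nat \<Rightarrow> nat list \<Rightarrow> nat list" where
  "incr_at j k = k[j := Suc (k ! j)]"

lemma length_fold_incr_at [simp]: "length (fold incr_at js k) = length k"
  by (induction js arbitrary: k) (auto simp: incr_at_def)

lemma sum_list_take_incr_at:
  assumes "j < length k"
  shows "sum_list (take l (incr_at j k)) = sum_list (take l k) + (if j < l then 1 else 0)"
proof -
  have "take l (incr_at j k) = (take l k)[j := Suc (k ! j)]"
    unfolding incr_at_def take_update_swap ..
  moreover have upd: "sum_list (xs[j := Suc (xs ! j)]) = Suc (sum_list xs)"
    if "j < length xs" for xs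
    using that by (induction xs arbitrary: j) (auto split: nat.split)
  ultimately show ?thesis
    using assms upd[of "take l k"] by (cases "j < l") (simp_all add: list_update_beyond)
qed

lemma sum_list_take_fold_incr_at:
  "\<forall>j\<in>set js. j < length k \<Longrightarrow>
   sum_list (take l (fold incr_at js k)) = sum_list (take l k) + length (filter (\<lambda>j. j < l) js)"
proof (induction js arbitrary: k)
  case (Cons j js)
  have "length (incr_at j k) = length k" by (simp add: incr_at_def)
  then show ?case
    using Cons.IH[of "incr_at j k"] Cons.prems sum_list_take_incr_at[of j k l] by simp
qed simp

lemma T_of_eq_image:
  "T_of L = (\<lambda>l. (sum_list (take l L), sum_list (take (length L) L) - sum_list (take l L)))
    ` {..length L}"
  unfolding T_of_eq_T_set T_set_eq_image by simp

definition pick_indices :: "nat list \<Rightarrow> bool list \<Rightarrow> nat list" where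
  "pick_indices is cs = map (\<lambda>(i, c). if c then Suc i else i) (zip is cs)"

text \<open>xpos l is the l-th partial sum of k + (1, ..., 1), so the target set of that vector
  consists of the points target l on the antidiagonal of level N. Each of them other than
  (0, N) and (N, 0) can be entered from the left or from below; for 0 < l < s this choice is
  cs ! (l - 1), True meaning from the left.\<close>

locale exponent_vector =
  fixes k :: "nat list" and s :: nat
  assumes length_k: "length k = s" and s_pos: "1 \<le> s"
begin

definition xpos :: "nat \<Rightarrow> nat" where
  "xpos l = sum_list (take l k) + l"

definition N :: nat where
  "N = xpos s"

definition target :: "nat \<Rightarrow> vert" where
  "target l = (xpos l, N - xpos l)"

definition from_left :: "bool list \<Rightarrow> nat \<Rightarrow> bool" where
  "from_left cs l \<longleftrightarrow> l = s \<or> (0 < l \<and> l < s \<and> cs ! (l - 1))"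

definition predecessor :: "bool list \<Rightarrow> nat \<Rightarrow> vert" where
  "predecessor cs l =
    (if from_left cs l then (xpos l - 1, N - xpos l) else (xpos l, N - xpos l - 1))"

definition chosen_edges :: "bool list \<Rightarrow> (vert \<times> vert) set" where
  "chosen_edges cs = (\<lambda>l. (predecessor cs l, target l)) ` {..s}"

definition choice_of :: "(vert \<times> vert) set \<Rightarrow> bool list" where
  "choice_of E = map (\<lambda>i. ((xpos (Suc i) - 1, N - xpos (Suc i)), target (Suc i)) \<in> E) [0..<s - 1]"

lemma xpos_strict_mono: "l < l' \<Longrightarrow> xpos l < xpos l'"
proof -
  assume "l < l'"
  then have "take l' k = take l k @ take (l' - l) (drop l k)"
    by (metis le_add_diff_inverse less_imp_le_nat take_add)
  then show ?thesis using \<open>l < l'\<close> unfolding xpos_def by simp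
qed

lemma xpos_ge: "l \<le> xpos l"
  by (simp add: xpos_def)

lemma xpos_0 [simp]: "xpos 0 = 0"
  by (simp add: xpos_def)

lemma xpos_le_N: "l \<le> s \<Longrightarrow> xpos l \<le> N"
  unfolding N_def using xpos_strict_mono[of l s] by (cases "l = s") auto

lemma N_pos: "1 \<le> N"
  unfolding N_def using xpos_ge[of s] s_pos by simp

lemma target_inj: "target l = target l' \<Longrightarrow> l = l'"
  unfolding target_def using xpos_strict_mono by (metis fst_conv linorder_neqE_nat less_irrefl)

lemma level_target: "l \<le> s \<Longrightarrow> level (target l) = N"
  using xpos_le_N by (simp add: target_def level_def)

lemma T_of_incr_all: "T_of (fold incr_at [0..<s] k) = target ` {..s}"
proof -
  have "length (filter (\<lambda>j. j < l) [0..<s]) = l" if "l \<le> s" for l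
  proof -
    have "[0..<s] = [0..<l] @ [l..<s]"
      using that upt_add_eq_append[of 0 l "s - l"] by simp
    then have "filter (\<lambda>j. j < l) [0..<s] = [0..<l]"
      by (simp add: filter_empty_conv)
    then show ?thesis by simp
  qed
  then have partial: "sum_list (take l (fold incr_at [0..<s] k)) = xpos l" if "l \<le> s" for l
    using that sum_list_take_fold_incr_at[of "[0..<s]" k l] length_k unfolding xpos_def by simp
  then show ?thesis
    unfolding T_of_eq_image target_def N_def using length_k
    by (intro image_cong) (simp_all add: partial[of s, symmetric])
qed

lemma count_picks_below:
  assumes cs: "length cs = s - 1" and l: "l \<le> s"
  shows "length (filter (\<lambda>j. j < l) (pick_indices [0..<s - 1] cs)) =
    (if from_left cs l then l - 1 else l)"
proof -
  define f where "f i = (if cs ! i then Suc i else i)" for i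
  have "pick_indices [0..<s - 1] cs = map f [0..<s - 1]"
    using cs by (intro nth_equalityI) (auto simp: pick_indices_def f_def)
  then have "length (filter (\<lambda>j. j < l) (pick_indices [0..<s - 1] cs)) =
      card {i. i < s - 1 \<and> f i < l}"
    by (simp add: length_filter_conv_card cong: conj_cong)
  also have "{i. i < s - 1 \<and> f i < l} =
      {..<l - 1} \<union> (if 0 < l \<and> l < s \<and> \<not> cs ! (l - 1) then {l - 1} else {})"
    (is "?lhs = ?rhs")
  proof (intro equalityI subsetI)
    fix i assume "i \<in> ?lhs"
    then show "i \<in> ?rhs" unfolding f_def by (cases "i = l - 1") (auto split: if_splits)
  qed (use l in \<open>auto simp: f_def split: if_splits\<close>)
  also have "card \<dots> = (l - 1) + (if 0 < l \<and> l < s \<and> \<not> cs ! (l - 1) then 1 else 0)"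
    by (subst card_Un_disjoint) auto
  finally show ?thesis using l s_pos unfolding from_left_def by auto
qed

lemma from_left_pos: "from_left cs l \<Longrightarrow> 1 \<le> l"
  using s_pos by (auto simp: from_left_def)

lemma T_of_picks:
  assumes cs: "length cs = s - 1"
  shows "T_of (fold incr_at (pick_indices [0..<s - 1] cs) k) = predecessor cs ` {..s}"
proof -
  define K where "K = fold incr_at (pick_indices [0..<s - 1] cs) k"
  have "\<forall>j\<in>set (pick_indices [0..<s - 1] cs). j < length k"
    using length_k by (auto simp: pick_indices_def dest!: set_zip_leftD)
  then have partial: "sum_list (take l K) = (if from_left cs l then xpos l - 1 else xpos l)"
    if "l \<le> s" for l
    using sum_list_take_fold_incr_at count_picks_below[OF cs that] from_left_pos[of cs l]
    unfolding xpos_def K_def by auto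
  have total: "sum_list (take s K) = N - 1"
    using partial[of s] by (simp add: from_left_def N_def)
  have "xpos l \<ge> 1" if "from_left cs l" for l
    using from_left_pos[OF that] xpos_ge[of l] by simp
  then have "(sum_list (take l K), sum_list (take s K) - sum_list (take l K)) = predecessor cs l"
    if "l \<le> s" for l
    using that xpos_le_N[OF that] by (simp add: partial total predecessor_def)
  moreover have "length K = s" using length_k by (simp add: K_def)
  ultimately show ?thesis
    unfolding T_of_eq_image K_def[symmetric] by (intro image_cong) auto
qed

lemma Qplus_edge_predecessor: "l \<le> s \<Longrightarrow> Qplus_edge (predecessor cs l) (target l)"
proof -
  assume l: "l \<le> s"
  show ?thesis
  proof (cases "from_left cs l")
    case True
    then have "xpos l \<ge> 1" using from_left_pos xpos_ge order_trans by blast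
    then show ?thesis using True by (simp add: predecessor_def target_def Qplus_edge_def)
  next
    case False
    then have "xpos l < N" using l xpos_strict_mono by (auto simp: from_left_def N_def)
    then show ?thesis using False by (simp add: predecessor_def target_def Qplus_edge_def)
  qed
qed

lemma Domain_chosen_edges: "Domain (chosen_edges cs) = predecessor cs ` {..s}"
  unfolding chosen_edges_def by force

lemma chosen_edges_in_edge_choices: "chosen_edges cs \<in> in_edge_choices (target ` {..s})"
proof -
  have "chosen_edges cs \<subseteq> {(u, t). t \<in> target ` {..s} \<and> Qplus_edge u t}"
    using Qplus_edge_predecessor unfolding chosen_edges_def by auto
  moreover have "\<exists>!u. (u, target l) \<in> chosen_edges cs" if "l \<le> s" for l
  proof
    show "(predecessor cs l, target l) \<in> chosen_edges cs"
      using that unfolding chosen_edges_def by blast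
    fix u assume "(u, target l) \<in> chosen_edges cs"
    then show "u = predecessor cs l"
      unfolding chosen_edges_def using target_inj by blast
  qed
  ultimately show ?thesis unfolding in_edge_choices_def by blast
qed

lemma choice_of_chosen_edges:
  assumes "length cs = s - 1"
  shows "choice_of (chosen_edges cs) = cs"
proof (rule nth_equalityI)
  show "length (choice_of (chosen_edges cs)) = length cs"
    using assms by (simp add: choice_of_def)
  fix i assume "i < length (choice_of (chosen_edges cs))"
  then have i: "i < s - 1" by (simp add: choice_of_def)
  have X: "xpos (Suc i) \<ge> 1" using xpos_ge[of "Suc i"] by simp
  have "choice_of (chosen_edges cs) ! i =
      (((xpos (Suc i) - 1, N - xpos (Suc i)), target (Suc i)) \<in> chosen_edges cs)"
    using i by (simp add: choice_of_def)
  also have "\<dots> = ((xpos (Suc i) - 1, N - xpos (Suc i)) = predecessor cs (Suc i))"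
    using i target_inj unfolding chosen_edges_def by auto
  also have "\<dots> = from_left cs (Suc i)"
    using X by (auto simp: predecessor_def)
  also have "\<dots> = cs ! i"
    using i by (auto simp: from_left_def)
  finally show "choice_of (chosen_edges cs) ! i = cs ! i" .
qed

lemma predecessor_choice_of:
  assumes E: "E \<in> in_edge_choices (target ` {..s})" and l: "l \<le> s"
    and u: "(u, target l) \<in> E"
  shows "u = predecessor (choice_of E) l"
proof -
  have unique: "u' = u" if "(u', target l) \<in> E" for u'
    using E u that l unfolding in_edge_choices_def by blast
  have "Qplus_edge u (target l)"
    using E u unfolding in_edge_choices_def by blast
  then have cases: "(xpos l \<ge> 1 \<and> u = (xpos l - 1, N - xpos l)) \<or>
      (N - xpos l \<ge> 1 \<and> u = (xpos l, N - xpos l - 1))"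
    unfolding target_def by (rule Qplus_edge_into)
  consider "l = 0" | "l = s" | "0 < l" "l < s" by (metis l le_neq_implies_less not_gr0)
  then show ?thesis
  proof cases
    case 1
    then show ?thesis using cases s_pos by (auto simp: predecessor_def from_left_def)
  next
    case 2
    then show ?thesis using cases by (auto simp: predecessor_def from_left_def N_def)
  next
    case 3
    moreover have "l - 1 < s - 1" "Suc (l - 1) = l" using 3 by simp_all
    ultimately have "from_left (choice_of E) l = (((xpos l - 1, N - xpos l), target l) \<in> E)"
      by (simp add: from_left_def choice_of_def)
    then show ?thesis
      using cases u unique[of "(xpos l - 1, N - xpos l)"] by (auto simp: predecessor_def)
  qed
qed

lemma chosen_edges_choice_of:
  assumes E: "E \<in> in_edge_choices (target ` {..s})"
  shows "chosen_edges (choice_of E) = E"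
proof (intro equalityI subsetI)
  fix e assume "e \<in> chosen_edges (choice_of E)"
  then obtain l where l: "l \<le> s" "e = (predecessor (choice_of E) l, target l)"
    unfolding chosen_edges_def by blast
  moreover obtain u where "(u, target l) \<in> E"
    using E l unfolding in_edge_choices_def by blast
  ultimately show "e \<in> E" using predecessor_choice_of[OF E] by metis
next
  fix e assume e: "e \<in> E"
  then obtain u l where "e = (u, target l)" "l \<le> s"
    using E unfolding in_edge_choices_def by blast
  then show "e \<in> chosen_edges (choice_of E)"
    using predecessor_choice_of[OF E] e unfolding chosen_edges_def by blast
qed

lemma bij_betw_chosen_edges:
  "bij_betw chosen_edges {cs. length cs = s - 1} (in_edge_choices (target ` {..s}))"
proof (rule bij_betw_byWitness[where f' = choice_of])
  show "choice_of ` in_edge_choices (target ` {..s}) \<subseteq> {cs. length cs = s - 1}"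
    by (auto simp: choice_of_def)
qed (auto simp: choice_of_chosen_edges chosen_edges_choice_of chosen_edges_in_edge_choices)

lemma V_count_incr_all:
  "V_count (fold incr_at [0..<s] k) =
    (\<Sum>cs | length cs = s - 1. V_count (fold incr_at (pick_indices [0..<s - 1] cs) k))"
proof -
  have "V_count (fold incr_at [0..<s] k) = card (tree_faces (target ` {..s}))"
    by (simp add: V_count_eq_card_tree_faces T_of_incr_all)
  also have "\<dots> = (\<Sum>E\<in>in_edge_choices (target ` {..s}). card (tree_faces (Domain E)))"
    using level_target N_pos by (intro card_tree_faces_eq_sum[where n = "N - 1"]) auto
  also have "\<dots> = (\<Sum>cs | length cs = s - 1. card (tree_faces (Domain (chosen_edges cs))))"
    by (rule sum.reindex_bij_betw[OF bij_betw_chosen_edges, symmetric])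
  also have "\<dots> = (\<Sum>cs | length cs = s - 1.
      V_count (fold incr_at (pick_indices [0..<s - 1] cs) k))"
  proof (rule sum.cong[OF refl])
    fix cs :: "bool list" assume "cs \<in> {cs. length cs = s - 1}"
    then have "Domain (chosen_edges cs) = T_of (fold incr_at (pick_indices [0..<s - 1] cs) k)"
      using T_of_picks[of cs] Domain_chosen_edges[of cs] by simp
    then show "card (tree_faces (Domain (chosen_edges cs))) =
        V_count (fold incr_at (pick_indices [0..<s - 1] cs) k)"
      by (simp add: V_count_eq_card_tree_faces)
  qed
  finally show ?thesis .
qed

end

section \<open>The differential operators on exponential generating functions\<close>

lemma prod_list_fact_incr_at:
  "j < length k \<Longrightarrow>
    prod_list (map fact (incr_at j k)) = Suc (k ! j) * (prod_list (map fact k) :: nat)"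
  unfolding incr_at_def
  by (induction k arbitrary: j) (auto simp: algebra_simps split: nat.split)

lemma foldr_pd_egf:
  fixes c :: "nat list \<Rightarrow> real" and s :: nat
  defines "f \<equiv> \<lambda>k. if length k = s then c k / real (prod_list (map fact k)) else 0"
  assumes "\<forall>j\<in>set js. j < s"
  shows "foldr pd js f k =
    (if length k = s then c (fold incr_at js k) / real (prod_list (map fact k)) else 0)"
  using assms(2)
proof (induction js arbitrary: k)
  case Nil
  then show ?case by (simp add: f_def)
next
  case (Cons j js)
  have "foldr pd (j # js) f k = real (Suc (k ! j)) * foldr pd js f (incr_at j k)"
    by (simp add: pd_def incr_at_def)
  also have "\<dots> = real (Suc (k ! j)) *
      (if length k = s then c (fold incr_at js (incr_at j k)) /
        real (prod_list (map fact (incr_at j k))) else 0)"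
    using Cons by (simp add: incr_at_def)
  also have "\<dots> = (if length k = s then c (fold incr_at (j # js) k) /
      real (prod_list (map fact k)) else 0)"
  proof (cases "length k = s")
    case True
    have "real (prod_list (map fact (incr_at j k))) =
        real (Suc (k ! j)) * real (prod_list (map fact k))"
      using True Cons.prems prod_list_fact_incr_at[of j k] by (metis list.set_intros(1) of_nat_mult)
    moreover have "(0::real) < real (prod_list (map fact k))"
      by (induction k) auto
    ultimately show ?thesis
      using True by (simp del: of_nat_Suc)
  qed simp
  finally show ?case .
qed

lemma foldr_pd_pair_sum:
  "foldr (\<lambda>i g. (\<lambda>k. pd i g k + pd (Suc i) g k)) is f k =
   (\<Sum>cs | length cs = length is. foldr pd (pick_indices is cs) f k)"
proof (induction "is" arbitrary: k)
  case Nil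
  have "{cs :: bool list. length cs = 0} = {[]}" by auto
  then show ?case by (simp add: pick_indices_def)
next
  case (Cons i "is")
  let ?A = "{cs :: bool list. length cs = length is}"
  have lists: "{cs :: bool list. length cs = length (i # is)} = (Cons False) ` ?A \<union> (Cons True) ` ?A"
    by (auto simp: length_Suc_conv)
  have fin: "finite ?A"
    using finite_lists_length_eq[of "UNIV :: bool set" "length is"] by simp
  let ?G = "foldr (\<lambda>i g. (\<lambda>k. pd i g k + pd (Suc i) g k)) is f"
  have G: "?G = (\<lambda>k. \<Sum>cs\<in>?A. foldr pd (pick_indices is cs) f k)"
    using Cons.IH by (simp add: fun_eq_iff)
  have pd_sum: "pd j (\<lambda>k. \<Sum>cs\<in>?A. h cs k) k = (\<Sum>cs\<in>?A. pd j (h cs) k)" for j h k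
    by (simp add: pd_def sum_distrib_left)
  have "foldr (\<lambda>i g. (\<lambda>k. pd i g k + pd (Suc i) g k)) (i # is) f k = pd i ?G k + pd (Suc i) ?G k"
    by simp
  also have "\<dots> = (\<Sum>cs\<in>?A. foldr pd (i # pick_indices is cs) f k) +
      (\<Sum>cs\<in>?A. foldr pd (Suc i # pick_indices is cs) f k)"
    unfolding G pd_sum by simp
  also have "\<dots> = (\<Sum>cs | length cs = length (i # is). foldr pd (pick_indices (i # is) cs) f k)"
    unfolding lists using fin
    by (subst sum.union_disjoint) (auto simp: sum.reindex pick_indices_def)
  finally show ?case .
qed

theorem corollary1p3:
  fixes s :: nat
  assumes "s \<ge> 1"
  shows "\<forall>k. mixed_op s (E_series s) k - prod_op s (E_series s) k = 0"
proof
  fix k :: "nat list"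
  let ?P = "real (prod_list (map fact k))"
  let ?picks = "\<lambda>cs. pick_indices [0..<s - 1] cs"
  have picks_lt: "\<forall>j\<in>set (?picks cs). j < s" for cs
    using assms by (auto simp: pick_indices_def dest!: set_zip_leftD)
  have "mixed_op s (E_series s) k =
      (if length k = s then real (V_count (fold incr_at [0..<s] k)) / ?P else 0)"
    unfolding mixed_op_def E_series_def by (rule foldr_pd_egf) simp
  moreover have "prod_op s (E_series s) k = (\<Sum>cs | length cs = s - 1.
      if length k = s then real (V_count (fold incr_at (?picks cs) k)) / ?P else 0)"
    unfolding prod_op_def foldr_pd_pair_sum E_series_def
    using foldr_pd_egf[OF picks_lt] by simp
  moreover have "V_count (fold incr_at [0..<s] k) =
      (\<Sum>cs | length cs = s - 1. V_count (fold incr_at (?picks cs) k))" if "length k = s"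
    using exponent_vector.V_count_incr_all[of k s] that assms by (simp add: exponent_vector_def)
  ultimately show "mixed_op s (E_series s) k - prod_op s (E_series s) k = 0"
    by (simp add: sum_divide_distrib)
qed

end
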